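(* Let $\mathcal{X}$ be a measurable space of inputs and let $P_{\mathrm{ben}}$ and $P_{\mathrm{bd}}$ be two probability distributions on $\mathcal{X}$. Let $x \mapsto S(x) \in \mathbb{R}^{n\times m}$ and $x \mapsto V(x) \in \mathbb{R}^{m\times d_v}$ be measurable maps. For $\lambda \in \mathbb{R}$ define $$R^{\lambda}(x) := \operatorname{softmax}(\lambda S(x))\,V(x) \in \mathbb{R}^{n\times d_v},$$ where the softmax is applied row-wise, so that $R^{1}(x)=\operatorname{softmax}(S(x))V(x)$. Define the scaling-induced response shift $$D(x;\lambda) := \operatorname{MSE}\big(R^{\lambda}(x), R^{1}(x)\big) = \frac{1}{N}\,\big\|R^{\lambda}(x)-R^{1}(x)\big\|_F^2, \qquad N := n\,d_v,$$ and for $c\in\{\mathrm{ben},\mathrm{bd}\}$ the class-wise mean curve $\bar D_c(\lambda) := \mathbb{E}_{x\sim P_c}[D(x;\lambda)]$. Assume there exist $\delta>0$ and measurable functions $M_1, M_2:\mathcal{X}\to[0,\infty)$ such that, for each $c\in\{\mathrm{ben},\mathrm{bd}\}$ and $P_c$-almost every $x$, and for all $\lambda\in(1-\delta,1+\delta)$, $$\Big\|\tfrac{\partial R^{\lambda}(x)}{\partial\lambda}\Big\|_F \le M_1(x), \qquad \Big\|\tfrac{\partial^2 R^{\lambda}(x)}{\partial\lambda^2}\Big\|_F \le M_2(x),$$ and $\mathbb{E}_{x\sim P_c}\big[M_1(x)^2+M_2(x)^2\big]<\infty$ for $c\in\{\mathrm{ben},\mathrm{bd}\}$. Then there exist finite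 constants $\Gamma_{\mathrm{ben}}$ and $\Gamma_{\mathrm{bd}}$ such that for each $c\in\{\mathrm{ben},\mathrm{bd}\}$, $$\bar D_c(\lambda) = \Gamma_c(\lambda-1)^2 + o\big((\lambda-1)^2\big) \qquad \text{as } \lambda\to 1.$$ Moreover, if $\Gamma_{\mathrm{ben}}\neq\Gamma_{\mathrm{bd}}$, then there exists $\epsilon>0$ such that $\bar D_{\mathrm{bd}}(\lambda)\neq \bar D_{\mathrm{ben}}(\lambda)$ for all $\lambda$ with $0<|\lambda-1|<\epsilon$.
   Context: This models a single cross-attention layer at a fixed denoising step of a text-to-image diffusion model: $S(x)$ is the attention score matrix for input prompt $x$, $V(x)$ the value matrix, and $\lambda$ a scaling factor applied to the attention scores. $P_{\mathrm{ben}}$ and $P_{\mathrm{bd}}$ are the benign and backdoor input distributions. The row-wise softmax of a row vector $s\in\mathbb{R}^m$ is $\operatorname{softmax}(s)_j = e^{s_j}/\sum_{k} e^{s_k}$. $\|\cdot\|_F$ is the Frobenius norm. *)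

theory Defs
  imports "HOL-Probability.Probability" "HOL-Library.Landau_Symbols"
begin

definition softmax_row :: "real ^ 'm \<Rightarrow> real ^ 'm" where
  "softmax_row s = (\<chi> j. exp (s $ j) / (\<Sum>k\<in>UNIV. exp (s $ k)))"

definition softmax_rows :: "real ^ 'm ^ 'n \<Rightarrow> real ^ 'm ^ 'n" where
  "softmax_rows A = (\<chi> i. softmax_row (A $ i))"

definition resp :: "('x \<Rightarrow> real ^ 'm ^ 'n) \<Rightarrow> ('x \<Rightarrow> real ^ 'dv ^ 'm) \<Rightarrow> real \<Rightarrow> 'x \<Rightarrow> real ^ 'dv ^ 'n" where
  "resp S V lam x = softmax_rows (lam *\<^sub>R S x) ** V x"

text \<open>Response shift D(x;lambda) = (1/(n dv)) ||R^lambda(x) - R^1(x)||_F^2.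
  The norm on real^'dv^'n is the Euclidean (Frobenius) norm.\<close>
definition shift :: "('x \<Rightarrow> real ^ 'm ^ 'n) \<Rightarrow> ('x \<Rightarrow> real ^ 'dv ^ 'm) \<Rightarrow> 'x \<Rightarrow> real \<Rightarrow> real" where
  "shift S V x lam = (norm (resp S V lam x - resp S V 1 x))\<^sup>2 / (real CARD('n) * real CARD('dv))"

definition mean_shift :: "'x measure \<Rightarrow> ('x \<Rightarrow> real ^ 'm ^ 'n) \<Rightarrow> ('x \<Rightarrow> real ^ 'dv ^ 'm) \<Rightarrow> real \<Rightarrow> real" where
  "mean_shift P S V lam = (\<integral>x. shift S V x lam \<partial>P)"

end

theory Submission
  imports Defs
begin

(*
  Near \<lambda> = 1 the map \<lambda> \<mapsto> R\<^sup>\<lambda>(x) is smooth, so by Taylor's theorem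
  R\<^sup>\<lambda>(x) - R\<^sup>1(x) = (\<lambda> - 1) R'(x) + r with |r| \<le> M2(x) (\<lambda> - 1)^2, where R'(x) is the
  derivative at \<lambda> = 1 and |R'(x)| \<le> M1(x). Expanding the square,
  |D(x;\<lambda>) - (\<lambda> - 1)^2 |R'(x)|^2 / N| \<le> 2 (M1(x)^2 + M2(x)^2) |\<lambda> - 1|^3 / N
  for |\<lambda> - 1| \<le> 1. The right-hand side is integrable, so integrating gives
  mean D = \<Gamma> (\<lambda> - 1)^2 + O(|\<lambda> - 1|^3) with \<Gamma> = E |R'(x)|^2 / N. Two such curves with
  different \<Gamma> differ by (\<Gamma>bd - \<Gamma>ben) (\<lambda> - 1)^2 + o((\<lambda> - 1)^2), which is nonzero on
  a punctured neighbourhood of 1.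
*)

lemma has_vector_derivative_vec_lambda:
  fixes f :: "real \<Rightarrow> 'a::real_normed_vector ^ 'n"
  assumes "\<And>i. ((\<lambda>t. f t $ i) has_vector_derivative f' $ i) F"
  shows "(f has_vector_derivative f') F"
  using assms unfolding has_vector_derivative_def has_derivative_def
  by (auto intro!: vec_tendstoI bounded_linear_scaleR_left)

lemma differentiable_vec_lambda:
  fixes f :: "real \<Rightarrow> 'a::real_normed_vector ^ 'n"
  assumes "\<And>i. (\<lambda>t. f t $ i) differentiable F"
  shows "f differentiable F"
  using assms by (intro differentiableI_vector[of _ "\<chi> i. vector_derivative (\<lambda>t. f t $ i) F"]
      has_vector_derivative_vec_lambda) (simp add: vector_derivative_works)

lemma bounded_linear_matrix_matrix_mult_left: "bounded_linear (\<lambda>A::real^'m^'n. A ** B)"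
  by (rule linear_conv_bounded_linear[THEN iffD1])
    (auto intro!: linearI simp: matrix_matrix_mult_def vec_eq_iff sum_distrib_left
      distrib_right sum.distrib mult.assoc)

lemma norm_diff_le_vector_derivative_bound:
  fixes f :: "real \<Rightarrow> 'a::real_normed_vector"
  assumes "\<And>t. t \<in> closed_segment a b \<Longrightarrow> (f has_vector_derivative f' t) (at t)"
    and "\<And>t. t \<in> closed_segment a b \<Longrightarrow> norm (f' t) \<le> B"
  shows "norm (f b - f a) \<le> B * \<bar>b - a\<bar>"
  using differentiable_bound[of "closed_segment a b" f "\<lambda>t h. h *\<^sub>R f' t" B b a] assms
  by (simp add: has_vector_derivative_def has_derivative_at_withinI onorm_scaleR_left onorm_id)

lemma vector_taylor_remainder_bound:
  fixes f :: "real \<Rightarrow> 'a::real_normed_vector"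
  assumes f': "\<And>t. t \<in> closed_segment a b \<Longrightarrow> (f has_vector_derivative f' t) (at t)"
    and f'': "\<And>t. t \<in> closed_segment a b \<Longrightarrow> (f' has_vector_derivative f'' t) (at t)"
    and B: "\<And>t. t \<in> closed_segment a b \<Longrightarrow> norm (f'' t) \<le> B"
  shows "norm (f b - f a - (b - a) *\<^sub>R f' a) \<le> B * (b - a)\<^sup>2"
proof -
  have "B \<ge> 0" using B[of a] norm_ge_zero order_trans by blast
  have f'_near_a: "norm (f' t - f' a) \<le> B * \<bar>b - a\<bar>" if t: "t \<in> closed_segment a b" for t
  proof -
    have sub: "closed_segment a t \<subseteq> closed_segment a b"
      using t by (simp add: subset_closed_segment)
    have "norm (f' t - f' a) \<le> B * \<bar>t - a\<bar>"
      using sub by (intro norm_diff_le_vector_derivative_bound[of a t f' f'']) (auto intro: f'' B)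
    also have "\<dots> \<le> B * \<bar>b - a\<bar>"
      using segment_bound(1)[OF t] \<open>B \<ge> 0\<close> by (intro mult_left_mono) auto
    finally show ?thesis .
  qed
  have "norm (f b - f a - (b - a) *\<^sub>R f' a) \<le> norm (b - a) * (B * \<bar>b - a\<bar>)"
    using f' f'_near_a
    by (intro vector_differentiable_bound_linearization[of "closed_segment a b"])
      (auto intro: has_vector_derivative_at_within)
  then show ?thesis by (simp add: power2_eq_square mult_ac)
qed

lemma abs_power2_norm_add_diff_le:
  fixes u r :: "'a::real_inner"
  shows "\<bar>(norm (u + r))\<^sup>2 - (norm u)\<^sup>2\<bar> \<le> 2 * norm u * norm r + (norm r)\<^sup>2"
proof -
  have "(norm (u + r))\<^sup>2 - (norm u)\<^sup>2 = 2 * (u \<bullet> r) + (norm r)\<^sup>2"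
    by (simp add: power2_norm_eq_inner inner_add_left inner_add_right inner_commute)
  moreover have "\<bar>u \<bullet> r\<bar> \<le> norm u * norm r" by (rule Cauchy_Schwarz_ineq2)
  ultimately show ?thesis
    using zero_le_power2[of "norm r"] unfolding abs_le_iff by linarith
qed

lemma power2_norm_diff_taylor_bound:
  fixes f :: "real \<Rightarrow> 'a::real_inner"
  assumes "\<And>t. t \<in> closed_segment a b \<Longrightarrow> (f has_vector_derivative f' t) (at t)"
    and "\<And>t. t \<in> closed_segment a b \<Longrightarrow> (f' has_vector_derivative f'' t) (at t)"
    and "\<And>t. t \<in> closed_segment a b \<Longrightarrow> norm (f'' t) \<le> B"
  shows "\<bar>(norm (f b - f a))\<^sup>2 - (b - a)\<^sup>2 * (norm (f' a))\<^sup>2\<bar>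
    \<le> 2 * norm (f' a) * B * \<bar>b - a\<bar> ^ 3 + B\<^sup>2 * (b - a) ^ 4"
proof -
  define u where "u = (b - a) *\<^sub>R f' a"
  define r where "r = f b - f a - u"
  have r: "norm r \<le> B * (b - a)\<^sup>2"
    unfolding r_def u_def using assms by (rule vector_taylor_remainder_bound)
  have "\<bar>(norm (f b - f a))\<^sup>2 - (b - a)\<^sup>2 * (norm (f' a))\<^sup>2\<bar> = \<bar>(norm (u + r))\<^sup>2 - (norm u)\<^sup>2\<bar>"
    by (simp add: r_def u_def power_mult_distrib)
  also have "\<dots> \<le> 2 * norm u * norm r + (norm r)\<^sup>2"
    by (rule abs_power2_norm_add_diff_le)
  also have "\<dots> \<le> 2 * norm u * (B * (b - a)\<^sup>2) + (B * (b - a)\<^sup>2)\<^sup>2"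
    using r by (intro add_mono mult_left_mono power_mono) auto
  also have "\<dots> = 2 * norm (f' a) * B * \<bar>b - a\<bar> ^ 3 + B\<^sup>2 * (b - a) ^ 4"
    by (simp add: u_def power2_eq_square power3_eq_cube power4_eq_xxxx abs_mult_self_eq mult_ac)
  finally show ?thesis .
qed

lemma abs_integral_diff_le_integral:
  fixes D Q K :: "'a \<Rightarrow> real"
  assumes D: "D \<in> borel_measurable M" and Q: "integrable M Q" and K: "integrable M K"
    and bound: "AE x in M. \<bar>D x - c * Q x\<bar> \<le> K x"
  shows "\<bar>(\<integral>x. D x \<partial>M) - c * (\<integral>x. Q x \<partial>M)\<bar> \<le> (\<integral>x. K x \<partial>M)"
proof -
  have majorant: "integrable M (\<lambda>x. \<bar>c\<bar> * \<bar>Q x\<bar> + K x)" using Q K by auto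
  have "AE x in M. norm (D x) \<le> norm (\<bar>c\<bar> * \<bar>Q x\<bar> + K x)"
    using bound by eventually_elim (simp add: abs_mult[symmetric]; arith)
  then have "integrable M D" by (rule Bochner_Integration.integrable_bound[OF majorant D])
  then have "(\<integral>x. D x \<partial>M) - c * (\<integral>x. Q x \<partial>M) = (\<integral>x. D x - c * Q x \<partial>M)"
    using Q by simp
  also have "\<bar>\<dots>\<bar> \<le> (\<integral>x. \<bar>D x - c * Q x\<bar> \<partial>M)" by (rule integral_abs_bound)
  also have "\<dots> \<le> (\<integral>x. K x \<partial>M)"
    using \<open>integrable M D\<close> Q K bound by (intro integral_mono_AE) auto
  finally show ?thesis .
qed

lemma smallo_power2_of_cubic_bound:
  fixes f :: "real \<Rightarrow> real"
  assumes cubic: "eventually (\<lambda>l. \<bar>f l\<bar> \<le> C * \<bar>l - a\<bar> ^ 3) (at a)"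
  shows "f \<in> o[at a](\<lambda>l. (l - a)\<^sup>2)"
proof (rule landau_o.smallI)
  fix c :: real assume "c > 0"
  have "((\<lambda>l. \<bar>C\<bar> * \<bar>l - a\<bar>) \<longlongrightarrow> \<bar>C\<bar> * \<bar>a - a\<bar>) (at a)"
    by (intro tendsto_intros)
  then have "eventually (\<lambda>l. \<bar>C\<bar> * \<bar>l - a\<bar> < c) (at a)"
    using \<open>c > 0\<close> by (intro order_tendstoD(2)) auto
  then show "eventually (\<lambda>l. norm (f l) \<le> c * norm ((l - a)\<^sup>2)) (at a)"
    using cubic
  proof eventually_elim
    case (elim l)
    have "C * \<bar>l - a\<bar> ^ 3 \<le> \<bar>C\<bar> * \<bar>l - a\<bar> ^ 3"
      by (intro mult_right_mono) auto
    also have "\<dots> = (\<bar>C\<bar> * \<bar>l - a\<bar>) * \<bar>l - a\<bar>\<^sup>2"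
      by (simp add: power2_eq_square power3_eq_cube)
    also have "\<dots> \<le> c * \<bar>l - a\<bar>\<^sup>2"
      using elim(1) by (intro mult_right_mono) auto
    finally show ?case using elim(2) by simp
  qed
qed

lemma eventually_neq_of_distinct_leading_coeffs:
  fixes f g w :: "'a \<Rightarrow> real"
  assumes f: "(\<lambda>x. f x - a * w x) \<in> o[F](w)" and g: "(\<lambda>x. g x - b * w x) \<in> o[F](w)"
    and "a \<noteq> b" and w: "eventually (\<lambda>x. w x \<noteq> 0) F"
  shows "eventually (\<lambda>x. f x \<noteq> g x) F"
proof -
  have "(\<lambda>x. (f x - a * w x) - (g x - b * w x)) \<in> o[F](w)"
    using f g by (rule sum_in_smallo)
  moreover have "\<bar>a - b\<bar> / 2 > 0" using \<open>a \<noteq> b\<close> by simp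
  ultimately have "eventually (\<lambda>x. norm ((f x - a * w x) - (g x - b * w x))
      \<le> \<bar>a - b\<bar> / 2 * norm (w x)) F"
    by (rule landau_o.smallD)
  then show ?thesis using w
  proof eventually_elim
    case (elim x)
    show "f x \<noteq> g x"
    proof
      assume "f x = g x"
      then have "(f x - a * w x) - (g x - b * w x) = - ((a - b) * w x)"
        by (simp add: algebra_simps)
      then have "\<bar>a - b\<bar> * \<bar>w x\<bar> \<le> \<bar>a - b\<bar> / 2 * \<bar>w x\<bar>"
        using elim(1) by (simp add: abs_mult)
      moreover have "0 < \<bar>a - b\<bar> * \<bar>w x\<bar>" using elim(2) \<open>a \<noteq> b\<close> by simp
      ultimately show False by linarith
    qed
  qed
qed

definition softmax_row_deriv :: "real ^ 'm \<Rightarrow> real \<Rightarrow> real ^ 'm" where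
  "softmax_row_deriv s t = (\<chi> j. softmax_row (t *\<^sub>R s) $ j * (s $ j - softmax_row (t *\<^sub>R s) \<bullet> s))"

lemma softmax_row_scaled_has_real_derivative:
  "((\<lambda>t. softmax_row (t *\<^sub>R s) $ j) has_real_derivative softmax_row_deriv s t $ j) (at t)"
proof -
  define Z where "Z t = (\<Sum>k\<in>UNIV. exp (t * s $ k))" for t
  have Z: "Z t > 0" unfolding Z_def by (intro sum_pos) auto
  have "((\<lambda>t. exp (t * s $ j) / Z t) has_real_derivative
      (exp (t * s $ j) * s $ j * Z t - exp (t * s $ j) * (\<Sum>k\<in>UNIV. exp (t * s $ k) * s $ k))
      / (Z t * Z t)) (at t)"
    using Z unfolding Z_def by (auto intro!: derivative_eq_intros)
  moreover have "(exp (t * s $ j) * s $ j * Z t - exp (t * s $ j) * (\<Sum>k\<in>UNIV. exp (t * s $ k) * s $ k))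
      / (Z t * Z t) = softmax_row_deriv s t $ j"
    using Z by (simp add: softmax_row_deriv_def softmax_row_def inner_vec_def Z_def[symmetric]
        sum_divide_distrib[symmetric] field_simps)
  ultimately show ?thesis by (simp add: softmax_row_def Z_def)
qed

lemma softmax_row_scaled_has_vector_derivative:
  "((\<lambda>t. softmax_row (t *\<^sub>R s)) has_vector_derivative softmax_row_deriv s t) (at t)"
  by (rule has_vector_derivative_vec_lambda)
    (simp add: softmax_row_scaled_has_real_derivative flip: has_real_derivative_iff_has_vector_derivative)

lemma softmax_row_deriv_differentiable: "(\<lambda>t. softmax_row_deriv s t) differentiable (at t)"
proof -
  let ?p = "softmax_row (t *\<^sub>R s)" and ?p' = "softmax_row_deriv s t"
  have "((\<lambda>t. softmax_row_deriv s t $ j) has_real_derivative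
      ?p' $ j * (s $ j - ?p \<bullet> s) - ?p $ j * (?p' \<bullet> s)) (at t)" for j
    unfolding softmax_row_deriv_def[of s] vec_lambda_beta inner_vec_def
    by (auto intro!: derivative_eq_intros
        softmax_row_scaled_has_real_derivative[of s, unfolded softmax_row_deriv_def vec_lambda_beta]
        simp: inner_vec_def mult.commute)
  then have "((\<lambda>t. softmax_row_deriv s t) has_vector_derivative
      (\<chi> j. ?p' $ j * (s $ j - ?p \<bullet> s) - ?p $ j * (?p' \<bullet> s))) (at t)"
    by (intro has_vector_derivative_vec_lambda)
      (simp flip: has_real_derivative_iff_has_vector_derivative)
  then show ?thesis by (rule differentiableI_vector)
qed

definition resp_deriv ::
    "('x \<Rightarrow> real ^ 'm ^ 'n) \<Rightarrow> ('x \<Rightarrow> real ^ 'dv ^ 'm) \<Rightarrow> real \<Rightarrow> 'x \<Rightarrow> real ^ 'dv ^ 'n" where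
  "resp_deriv S V t x = (\<chi> i. softmax_row_deriv (S x $ i) t) ** V x"

lemma resp_has_vector_derivative:
  "((\<lambda>t. resp S V t x) has_vector_derivative resp_deriv S V t x) (at t)"
proof -
  have "((\<lambda>t. softmax_rows (t *\<^sub>R S x)) has_vector_derivative
      (\<chi> i. softmax_row_deriv (S x $ i) t)) (at t)"
    by (rule has_vector_derivative_vec_lambda)
      (simp add: softmax_rows_def softmax_row_scaled_has_vector_derivative)
  then show ?thesis unfolding resp_def resp_deriv_def
    by (rule bounded_linear.has_vector_derivative[OF bounded_linear_matrix_matrix_mult_left])
qed

lemma vector_derivative_resp: "vector_derivative (\<lambda>t. resp S V t x) (at t) = resp_deriv S V t x"
  by (rule vector_derivative_at[OF resp_has_vector_derivative])

lemma resp_deriv_differentiable: "(\<lambda>t. resp_deriv S V t x) differentiable (at t)"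
proof -
  have "(\<lambda>t. \<chi> i. softmax_row_deriv (S x $ i) t) differentiable (at t)"
    by (rule differentiable_vec_lambda) (simp add: softmax_row_deriv_differentiable)
  moreover have "(\<lambda>A. A ** V x) differentiable (at A)" for A
    by (rule bounded_linear_imp_differentiable[OF bounded_linear_matrix_matrix_mult_left])
  ultimately show ?thesis unfolding resp_deriv_def
    by (rule differentiable_chain_at[unfolded o_def])
qed

lemma power2_norm_matrix: "(norm (A :: real ^ 'k ^ 'n))\<^sup>2 = (\<Sum>i\<in>UNIV. \<Sum>j\<in>UNIV. (A $ i $ j)\<^sup>2)"
  unfolding power2_norm_eq_inner inner_vec_def inner_real_def by (simp add: power2_eq_square)

lemma borel_measurable_matrix_entry [measurable (raw)]:
  fixes S :: "'x \<Rightarrow> real ^ 'm ^ 'n"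
  assumes "S \<in> borel_measurable M"
  shows "(\<lambda>x. S x $ i $ j) \<in> borel_measurable M"
  by (rule borel_measurable_continuous_on[OF _ assms]) (intro continuous_intros)

lemma borel_measurable_shift:
  assumes [measurable]: "S \<in> borel_measurable M" "V \<in> borel_measurable M"
  shows "(\<lambda>x. shift S V x l) \<in> borel_measurable M"
  unfolding shift_def power2_norm_matrix resp_def softmax_rows_def softmax_row_def matrix_matrix_mult_def
  by simp measurable

definition shift_quadratic_coeff ::
    "('x \<Rightarrow> real ^ 'm ^ 'n) \<Rightarrow> ('x \<Rightarrow> real ^ 'dv ^ 'm) \<Rightarrow> 'x \<Rightarrow> real" where
  "shift_quadratic_coeff S V x = (norm (resp_deriv S V 1 x))\<^sup>2 / (real CARD('n) * real CARD('dv))"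

lemma borel_measurable_shift_quadratic_coeff:
  assumes [measurable]: "S \<in> borel_measurable M" "V \<in> borel_measurable M"
  shows "shift_quadratic_coeff S V \<in> borel_measurable M"
  unfolding shift_quadratic_coeff_def power2_norm_matrix resp_deriv_def softmax_row_deriv_def
    softmax_row_def matrix_matrix_mult_def inner_vec_def
  by simp measurable

lemma shift_taylor_bound:
  fixes S :: "'x \<Rightarrow> real ^ 'm ^ 'n" and V :: "'x \<Rightarrow> real ^ 'dv ^ 'm"
  assumes bounds: "\<forall>u\<in>{1-\<delta><..<1+\<delta>}.
      norm (vector_derivative (\<lambda>t. resp S V t x) (at u)) \<le> A \<and>
      norm (vector_derivative (\<lambda>u. vector_derivative (\<lambda>t. resp S V t x) (at u)) (at u)) \<le> B"
    and l: "\<bar>l - 1\<bar> < \<delta>" "\<bar>l - 1\<bar> \<le> 1"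
  shows "\<bar>shift S V x l - (l - 1)\<^sup>2 * shift_quadratic_coeff S V x\<bar>
    \<le> \<bar>l - 1\<bar> ^ 3 * (2 * (A\<^sup>2 + B\<^sup>2) / (real CARD('n) * real CARD('dv)))"
proof -
  define N where "N = real CARD('n) * real CARD('dv)"
  define f' where "f' t = resp_deriv S V t x" for t
  define f'' where "f'' t = vector_derivative f' (at t)" for t
  have f': "((\<lambda>t. resp S V t x) has_vector_derivative f' t) (at t)" for t
    unfolding f'_def by (rule resp_has_vector_derivative)
  have f'': "(f' has_vector_derivative f'' t) (at t)" for t
    unfolding f''_def f'_def using resp_deriv_differentiable by (rule vector_derivative_works[THEN iffD1])
  have "\<forall>u\<in>{1-\<delta><..<1+\<delta>}. norm (f' u) \<le> A \<and> norm (f'' u) \<le> B"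
    using bounds by (simp add: vector_derivative_resp f'_def[abs_def] f''_def[abs_def])
  moreover have "closed_segment 1 l \<subseteq> {1-\<delta><..<1+\<delta>}"
    using l(1) by (auto simp: closed_segment_eq_real_ivl split: if_splits)
  ultimately have A: "norm (f' 1) \<le> A" and B: "\<And>t. t \<in> closed_segment 1 l \<Longrightarrow> norm (f'' t) \<le> B"
    by auto
  have "B \<ge> 0" using B[of 1] norm_ge_zero order_trans by blast
  have "\<bar>(norm (resp S V l x - resp S V 1 x))\<^sup>2 - (l - 1)\<^sup>2 * (norm (f' 1))\<^sup>2\<bar>
      \<le> 2 * norm (f' 1) * B * \<bar>l - 1\<bar> ^ 3 + B\<^sup>2 * (l - 1) ^ 4"
    using f' f'' B by (intro power2_norm_diff_taylor_bound)
  also have "\<dots> \<le> 2 * A * B * \<bar>l - 1\<bar> ^ 3 + B\<^sup>2 * \<bar>l - 1\<bar> ^ 3"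
  proof (intro add_mono mult_right_mono mult_left_mono)
    have "(l - 1) ^ 4 = \<bar>l - 1\<bar> ^ 3 * \<bar>l - 1\<bar>"
      by (simp add: power_even_abs flip: power_Suc2)
    then show "(l - 1) ^ 4 \<le> \<bar>l - 1\<bar> ^ 3"
      using l(2) by (simp add: mult_left_le)
  qed (use A \<open>B \<ge> 0\<close> in auto)
  also have "\<dots> = \<bar>l - 1\<bar> ^ 3 * (2 * A * B + B\<^sup>2)" by (simp add: algebra_simps)
  also have "\<dots> \<le> \<bar>l - 1\<bar> ^ 3 * (2 * (A\<^sup>2 + B\<^sup>2))"
  proof (rule mult_left_mono)
    show "2 * A * B + B\<^sup>2 \<le> 2 * (A\<^sup>2 + B\<^sup>2)"
      using sum_squares_bound[of A B] zero_le_power2[of A] by (smt (verit))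
  qed simp
  finally have bound: "\<bar>(norm (resp S V l x - resp S V 1 x))\<^sup>2 - (l - 1)\<^sup>2 * (norm (f' 1))\<^sup>2\<bar>
      \<le> \<bar>l - 1\<bar> ^ 3 * (2 * (A\<^sup>2 + B\<^sup>2))" .
  have "shift S V x l - (l - 1)\<^sup>2 * shift_quadratic_coeff S V x
      = ((norm (resp S V l x - resp S V 1 x))\<^sup>2 - (l - 1)\<^sup>2 * (norm (f' 1))\<^sup>2) / N"
    by (simp add: shift_def shift_quadratic_coeff_def f'_def N_def diff_divide_distrib)
  moreover have "N > 0" unfolding N_def by simp
  ultimately show ?thesis
    using bound by (simp add: N_def[symmetric] divide_right_mono)
qed

lemma mean_shift_quadratic_expansion:
  fixes P :: "'x measure" and S :: "'x \<Rightarrow> real ^ 'm ^ 'n" and V :: "'x \<Rightarrow> real ^ 'dv ^ 'm"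
  assumes S: "S \<in> borel_measurable P" and V: "V \<in> borel_measurable P" and "\<delta> > 0"
    and bounds: "AE x in P. \<forall>l\<in>{1-\<delta><..<1+\<delta>}.
      norm (vector_derivative (\<lambda>t. resp S V t x) (at l)) \<le> M1 x \<and>
      norm (vector_derivative (\<lambda>u. vector_derivative (\<lambda>t. resp S V t x) (at u)) (at l)) \<le> M2 x"
    and M: "integrable P (\<lambda>x. (M1 x)\<^sup>2 + (M2 x)\<^sup>2)"
  shows "(\<lambda>l. mean_shift P S V l - (\<integral>x. shift_quadratic_coeff S V x \<partial>P) * (l - 1)\<^sup>2)
    \<in> o[at 1](\<lambda>l. (l - 1)\<^sup>2)"
proof -
  define N where "N = real CARD('n) * real CARD('dv)"
  define K where "K x = 2 / N * ((M1 x)\<^sup>2 + (M2 x)\<^sup>2)" for x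
  have K: "integrable P K"
    unfolding K_def using M by (rule Bochner_Integration.integrable_mult_right)
  have pointwise: "AE x in P. \<bar>shift S V x l - (l - 1)\<^sup>2 * shift_quadratic_coeff S V x\<bar>
      \<le> \<bar>l - 1\<bar> ^ 3 * K x"
    if "\<bar>l - 1\<bar> < min \<delta> 1" for l
    using bounds
  proof eventually_elim
    case (elim x)
    have "\<bar>l - 1\<bar> < \<delta>" "\<bar>l - 1\<bar> \<le> 1" using that by auto
    from shift_taylor_bound[OF elim this] show ?case by (simp add: K_def N_def)
  qed
  have Q: "integrable P (shift_quadratic_coeff S V)"
  proof (rule Bochner_Integration.integrable_bound[OF K borel_measurable_shift_quadratic_coeff[OF S V]])
    show "AE x in P. norm (shift_quadratic_coeff S V x) \<le> norm (K x)"
      using bounds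
    proof eventually_elim
      case (elim x)
      then have "norm (resp_deriv S V 1 x) \<le> M1 x"
        using \<open>\<delta> > 0\<close> by (simp add: vector_derivative_resp)
      then have "(norm (resp_deriv S V 1 x))\<^sup>2 \<le> (M1 x)\<^sup>2"
        by (intro power_mono) auto
      also have "\<dots> \<le> 2 * ((M1 x)\<^sup>2 + (M2 x)\<^sup>2)" by simp
      finally show ?case
        by (simp add: shift_quadratic_coeff_def K_def N_def divide_right_mono)
    qed
  qed
  have "\<bar>mean_shift P S V l - (\<integral>x. shift_quadratic_coeff S V x \<partial>P) * (l - 1)\<^sup>2\<bar>
      \<le> (\<integral>x. K x \<partial>P) * \<bar>l - 1\<bar> ^ 3"
    if "\<bar>l - 1\<bar> < min \<delta> 1" for l
    using abs_integral_diff_le_integral[OF borel_measurable_shift[OF S V] Q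
        Bochner_Integration.integrable_mult_right[OF K] pointwise[OF that]]
    by (simp add: mean_shift_def mult.commute)
  then have "eventually (\<lambda>l. \<bar>mean_shift P S V l - (\<integral>x. shift_quadratic_coeff S V x \<partial>P) * (l - 1)\<^sup>2\<bar>
      \<le> (\<integral>x. K x \<partial>P) * \<bar>l - 1\<bar> ^ 3) (at 1)"
    unfolding eventually_at using \<open>\<delta> > 0\<close> by (intro exI[of _ "min \<delta> 1"]) (auto simp: dist_real_def)
  then show ?thesis by (rule smallo_power2_of_cubic_bound)
qed

theorem theorem3p1:
  fixes Pben Pbd :: "'x measure"
    and S :: "'x \<Rightarrow> real ^ 'm ^ 'n" and V :: "'x \<Rightarrow> real ^ 'dv ^ 'm"
    and M1 M2 :: "'x \<Rightarrow> real" and \<delta> :: real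
  assumes "prob_space Pben" and "prob_space Pbd"
    and "sets Pbd = sets Pben"
    and "S \<in> borel_measurable Pben" and "V \<in> borel_measurable Pben"
    and "\<delta> > 0"
    and "M1 \<in> borel_measurable Pben" and "M2 \<in> borel_measurable Pben"
    and "\<And>x. M1 x \<ge> 0" and "\<And>x. M2 x \<ge> 0"
    and "\<And>P. P \<in> {Pben, Pbd} \<Longrightarrow> AE x in P. \<forall>l\<in>{1-\<delta><..<1+\<delta>}.
           norm (vector_derivative (\<lambda>t. resp S V t x) (at l)) \<le> M1 x \<and>
           norm (vector_derivative (\<lambda>u. vector_derivative (\<lambda>t. resp S V t x) (at u)) (at l)) \<le> M2 x"
    and "\<And>P. P \<in> {Pben, Pbd} \<Longrightarrow> integrable P (\<lambda>x. (M1 x)\<^sup>2 + (M2 x)\<^sup>2)"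
  shows "\<exists>\<Gamma>ben \<Gamma>bd.
      (\<lambda>l. mean_shift Pben S V l - \<Gamma>ben * (l - 1)\<^sup>2) \<in> o[at 1](\<lambda>l. (l - 1)\<^sup>2) \<and>
      (\<lambda>l. mean_shift Pbd S V l - \<Gamma>bd * (l - 1)\<^sup>2) \<in> o[at 1](\<lambda>l. (l - 1)\<^sup>2) \<and>
      (\<Gamma>ben \<noteq> \<Gamma>bd \<longrightarrow>
         (\<exists>\<epsilon>>0. \<forall>l. 0 < \<bar>l - 1\<bar> \<and> \<bar>l - 1\<bar> < \<epsilon> \<longrightarrow> mean_shift Pbd S V l \<noteq> mean_shift Pben S V l))"
proof -
  have "S \<in> borel_measurable Pbd" "V \<in> borel_measurable Pbd"
    using assms(4,5) measurable_cong_sets[OF assms(3) refl] by auto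
  then have bd: "(\<lambda>l. mean_shift Pbd S V l - (\<integral>x. shift_quadratic_coeff S V x \<partial>Pbd) * (l - 1)\<^sup>2)
      \<in> o[at 1](\<lambda>l. (l - 1)\<^sup>2)"
    using assms(6) assms(11,12)[of Pbd] by (intro mean_shift_quadratic_expansion) simp_all
  have ben: "(\<lambda>l. mean_shift Pben S V l - (\<integral>x. shift_quadratic_coeff S V x \<partial>Pben) * (l - 1)\<^sup>2)
      \<in> o[at 1](\<lambda>l. (l - 1)\<^sup>2)"
    using assms(4-6) assms(11,12)[of Pben] by (intro mean_shift_quadratic_expansion) simp_all
  have "\<exists>\<epsilon>>0. \<forall>l. 0 < \<bar>l - 1\<bar> \<and> \<bar>l - 1\<bar> < \<epsilon> \<longrightarrow> mean_shift Pbd S V l \<noteq> mean_shift Pben S V l"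
    if "(\<integral>x. shift_quadratic_coeff S V x \<partial>Pben) \<noteq> (\<integral>x. shift_quadratic_coeff S V x \<partial>Pbd)"
  proof -
    have "eventually (\<lambda>l. (l - 1)\<^sup>2 \<noteq> (0::real)) (at 1)"
      by (simp add: eventually_at_filter)
    then have "eventually (\<lambda>l. mean_shift Pbd S V l \<noteq> mean_shift Pben S V l) (at 1)"
      by (rule eventually_neq_of_distinct_leading_coeffs[OF bd ben not_sym[OF that]])
    then show ?thesis by (simp add: eventually_at dist_real_def)
  qed
  with ben bd show ?thesis by blast
qed

end
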